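(* Let $X$ be a real Banach space with the Ball Dentable Property ($BDP$). Then for every separable closed subspace $Y$ of $X$ there exists a separable closed subspace $Z$ of $X$ with $Y\subseteq Z$ such that $Z$ has $BDP$.
   Context: For a real Banach space $X$, $B_X$ denotes its closed unit ball and $X^*$ its dual. A slice of a bounded set $C\subseteq X$ is a set $S(C,x^*,\alpha)=\{x\in C: x^*(x)>\sup x^*(C)-\alpha\}$ with $x^*\in X^*$, $\|x^*\|=1$, $\alpha>0$. $X$ has the Ball Dentable Property ($BDP$) if for every $\varepsilon>0$ there is a slice of $B_X$ of diameter less than $\varepsilon$. *)

theory Defs
  imports "HOL-Analysis.Analysis"
begin

text \<open>Closed unit ball of a subspace Z (Z = UNIV gives B_X).\<close>
definition unit_ball_on :: "'a::real_normed_vector set \<Rightarrow> 'a set" where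
  "unit_ball_on Z = {x \<in> Z. norm x \<le> 1}"

definition dual_unit_on :: "'a::real_normed_vector set \<Rightarrow> ('a \<Rightarrow> real) \<Rightarrow> bool" where
  "dual_unit_on Z f \<longleftrightarrow>
     (\<forall>x\<in>Z. \<forall>y\<in>Z. f (x + y) = f x + f y) \<and>
     (\<forall>c. \<forall>x\<in>Z. f (c *\<^sub>R x) = c * f x) \<and>
     (\<exists>K. \<forall>x\<in>Z. \<bar>f x\<bar> \<le> K * norm x) \<and>
     (SUP x\<in>unit_ball_on Z. \<bar>f x\<bar>) = 1"

definition slice :: "'a set \<Rightarrow> ('a \<Rightarrow> real) \<Rightarrow> real \<Rightarrow> 'a set" where
  "slice C f \<alpha> = {x \<in> C. f x > (SUP y\<in>C. f y) - \<alpha>}"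

definition BDP_on :: "'a::real_normed_vector set \<Rightarrow> bool" where
  "BDP_on Z \<longleftrightarrow> (\<forall>\<epsilon>>0. \<exists>f \<alpha>. dual_unit_on Z f \<and> \<alpha> > 0 \<and>
                     diameter (slice (unit_ball_on Z) f \<alpha>) < \<epsilon>)"

end

theory Submission
  imports Defs
begin

text \<open>For each \<open>n\<close> pick a slice of \<open>B\<^sub>X\<close> of diameter below \<open>1 / (n + 1)\<close> and a point \<open>x\<^sub>n\<close>
  of it at which the functional is positive. Every subspace \<open>Z\<close> containing all \<open>x\<^sub>n\<close> has the
  Ball Dentable Property: restricting the functional to \<open>Z\<close> and dividing by its norm there
  (which lies between \<open>f x\<^sub>n > 0\<close> and \<open>1\<close>) yields a slice of \<open>B\<^sub>Z\<close> inside the original slice.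
  For \<open>Z\<close> take the closure of the rational linear span of the \<open>x\<^sub>n\<close> and a countable dense
  subset of \<open>Y\<close>.\<close>

lemma countable_rational_span:
  fixes C :: "'a::real_normed_vector set"
  assumes "countable C"
  obtains T where "countable T" "C \<subseteq> T" "0 \<in> T"
    "\<And>x y. x \<in> T \<Longrightarrow> y \<in> T \<Longrightarrow> x + y \<in> T"
    "\<And>q x. q \<in> \<rat> \<Longrightarrow> x \<in> T \<Longrightarrow> q *\<^sub>R x \<in> T"
proof
  define comb where "comb = (\<lambda>l::(rat \<times> 'a) list. \<Sum>(q, c)\<leftarrow>l. of_rat q *\<^sub>R c)"
  define T where "T = comb ` lists (UNIV \<times> C)"
  show "countable T"
    using assms unfolding T_def by simp
  show "C \<subseteq> T"
  proof
    fix c assume "c \<in> C"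
    then have "comb [(1, c)] \<in> T"
      unfolding T_def by (intro imageI) simp
    then show "c \<in> T" by (simp add: comb_def)
  qed
  show "0 \<in> T"
    unfolding T_def by (rule image_eqI[of _ _ "[]"]) (auto simp: comb_def)
  show "x + y \<in> T" if xy: "x \<in> T" "y \<in> T" for x y
  proof -
    obtain l1 l2 where "l1 \<in> lists (UNIV \<times> C)" "l2 \<in> lists (UNIV \<times> C)" "x = comb l1" "y = comb l2"
      using xy unfolding T_def by auto
    moreover have "comb (l1 @ l2) = comb l1 + comb l2" by (simp add: comb_def)
    ultimately show ?thesis
      unfolding T_def by (metis append_in_lists_conv image_eqI)
  qed
  show "q *\<^sub>R x \<in> T" if "q \<in> \<rat>" "x \<in> T" for q x
  proof -
    obtain r where r: "q = of_rat r" using \<open>q \<in> \<rat>\<close> by (auto elim: Rats_cases)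
    obtain l where l: "l \<in> lists (UNIV \<times> C)" "x = comb l" using \<open>x \<in> T\<close> unfolding T_def by auto
    define l' where "l' = map (\<lambda>(p, c). (r * p, c)) l"
    have "l' \<in> lists (UNIV \<times> C)" using l(1) unfolding l'_def by auto
    moreover have "comb l' = q *\<^sub>R comb l"
      unfolding l'_def comb_def r
      by (induction l) (auto simp: of_rat_mult scaleR_add_right)
    ultimately show ?thesis using l unfolding T_def by (metis image_eqI)
  qed
qed

text \<open>Density of \<open>\<rat>\<close> in \<open>\<real>\<close> upgrades closure under rational scalars to real ones.\<close>
lemma subspace_closure_rational_span:
  fixes T :: "'a::real_normed_vector set"
  assumes "0 \<in> T" "\<And>x y. x \<in> T \<Longrightarrow> y \<in> T \<Longrightarrow> x + y \<in> T"
    "\<And>q x. q \<in> \<rat> \<Longrightarrow> x \<in> T \<Longrightarrow> q *\<^sub>R x \<in> T"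
  shows "subspace (closure T)"
  unfolding subspace_def
proof (intro conjI ballI allI)
  show "0 \<in> closure T" using assms(1) closure_subset by blast
next
  fix x y assume "x \<in> closure T" "y \<in> closure T"
  then obtain a b where a: "\<forall>n. a n \<in> T" "a \<longlonglongrightarrow> x" and b: "\<forall>n. b n \<in> T" "b \<longlonglongrightarrow> y"
    unfolding closure_sequential by blast
  have "\<forall>n. a n + b n \<in> T" using a b assms(2) by blast
  moreover have "(\<lambda>n. a n + b n) \<longlonglongrightarrow> x + y" using a b by (intro tendsto_add)
  ultimately show "x + y \<in> closure T"
    unfolding closure_sequential by (intro exI[of _ "\<lambda>n. a n + b n"]) auto
next
  fix c :: real and x assume "x \<in> closure T"
  then obtain a where a: "\<forall>n. a n \<in> T" "a \<longlonglongrightarrow> x"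
    unfolding closure_sequential by blast
  have "c \<in> closure \<rat>" by (simp add: Rats_closure_real)
  then obtain q where q: "\<forall>n. q n \<in> \<rat>" "q \<longlonglongrightarrow> c"
    unfolding closure_sequential by blast
  have "\<forall>n. q n *\<^sub>R a n \<in> T" using a q assms(3) by blast
  moreover have "(\<lambda>n. q n *\<^sub>R a n) \<longlonglongrightarrow> c *\<^sub>R x" using a q by (intro tendsto_scaleR)
  ultimately show "c *\<^sub>R x \<in> closure T"
    unfolding closure_sequential by (intro exI[of _ "\<lambda>n. q n *\<^sub>R a n"]) auto
qed

lemma separable_space_closure:
  fixes T :: "'a::metric_space set"
  assumes "countable T"
  shows "separable_space (subtopology euclidean (closure T))"
  unfolding separable_space_def
proof (intro exI[of _ T] conjI)
  show "T \<subseteq> topspace (subtopology euclidean (closure T))"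
    using closure_subset by auto
  show "subtopology euclidean (closure T) closure_of T = topspace (subtopology euclidean (closure T))"
    using closure_of_subtopology_open[of euclidean "closure T" T] closure_subset by auto
qed fact

lemma separable_space_imp_dense_countable:
  fixes Y :: "'a::metric_space set"
  assumes "separable_space (subtopology euclidean Y)"
  obtains D where "countable D" "Y \<subseteq> closure D"
proof -
  obtain D where D: "countable D" "D \<subseteq> Y" "subtopology euclidean Y closure_of D = Y"
    using assms unfolding separable_space_def by auto
  then have "Y \<subseteq> closure D"
    using closure_of_subtopology_open[of euclidean Y D] by auto
  with D(1) show thesis by (rule that)
qed

lemma separable_closed_subspace_superset:
  fixes C :: "'a::real_normed_vector set"
  assumes "countable C"
  obtains Z where "subspace Z" "closed Z" "separable_space (subtopology euclidean Z)" "C \<subseteq> Z"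
proof -
  obtain T where T: "countable T" "C \<subseteq> T" "0 \<in> T"
    "\<And>x y. x \<in> T \<Longrightarrow> y \<in> T \<Longrightarrow> x + y \<in> T"
    "\<And>q x. q \<in> \<rat> \<Longrightarrow> x \<in> T \<Longrightarrow> q *\<^sub>R x \<in> T"
    using countable_rational_span[OF assms] by blast
  show thesis
  proof (rule that)
    show "subspace (closure T)" using T(3-5) by (rule subspace_closure_rational_span)
    show "separable_space (subtopology euclidean (closure T))"
      using T(1) by (rule separable_space_closure)
    show "C \<subseteq> closure T" using T(2) closure_subset by blast
  qed simp
qed

lemma SUP_divide_pos:
  fixes h :: "'b \<Rightarrow> real"
  assumes "A \<noteq> {}" "bdd_above (h ` A)" "c > 0"
  shows "(SUP x\<in>A. h x / c) = (SUP x\<in>A. h x) / c"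
proof (rule antisym)
  show "(SUP x\<in>A. h x / c) \<le> (SUP x\<in>A. h x) / c"
    using assms by (intro cSUP_least) (auto intro!: divide_right_mono cSUP_upper)
  have "h x \<le> c * (SUP x\<in>A. h x / c)" if "x \<in> A" for x
  proof -
    obtain M where "\<forall>x\<in>A. h x \<le> M" using assms(2) by (auto simp: bdd_above_def)
    then have "\<forall>x\<in>A. h x / c \<le> M / c" using assms(3) by (auto intro: divide_right_mono)
    then have "bdd_above ((\<lambda>x. h x / c) ` A)" by (auto simp: bdd_above_def)
    with that have "h x / c \<le> (SUP x\<in>A. h x / c)" by (rule cSUP_upper)
    then show ?thesis using assms(3) by (simp add: pos_divide_le_eq mult.commute)
  qed
  then have "(SUP x\<in>A. h x) \<le> c * (SUP x\<in>A. h x / c)"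
    using assms(1) by (intro cSUP_least)
  then show "(SUP x\<in>A. h x) / c \<le> (SUP x\<in>A. h x / c)"
    using assms(3) by (simp add: divide_le_eq mult.commute)
qed

lemma bdd_above_abs_dual_unit_on:
  assumes "dual_unit_on Z f"
  shows "bdd_above ((\<lambda>x. \<bar>f x\<bar>) ` unit_ball_on Z)"
proof -
  obtain K where K: "\<forall>x\<in>Z. \<bar>f x\<bar> \<le> K * norm x"
    using assms unfolding dual_unit_on_def by blast
  have "\<bar>f x\<bar> \<le> \<bar>K\<bar>" if "x \<in> unit_ball_on Z" for x
  proof -
    have "\<bar>f x\<bar> \<le> K * norm x" using K that by (auto simp: unit_ball_on_def)
    also have "\<dots> \<le> \<bar>K\<bar> * norm x" by (simp add: mult_right_mono)
    also have "\<dots> \<le> \<bar>K\<bar>" using that by (auto simp: unit_ball_on_def intro: mult_left_le)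
    finally show ?thesis .
  qed
  then show ?thesis by (auto simp: bdd_above_def)
qed

lemma bdd_above_dual_unit_on:
  assumes "dual_unit_on Z f"
  shows "bdd_above (f ` unit_ball_on Z)"
  using bdd_above_abs_dual_unit_on[OF assms]
  by (auto simp: bdd_above_def abs_le_iff)

lemma unit_ball_on_nonempty: "subspace Z \<Longrightarrow> unit_ball_on Z \<noteq> {}"
  using subspace_0 by (force simp: unit_ball_on_def)

text \<open>The unit ball of a subspace is symmetric, so the supremum of \<open>f\<close> equals that of \<open>\<bar>f\<bar>\<close>.\<close>
lemma SUP_unit_ball_dual_unit_on:
  assumes "subspace Z" "dual_unit_on Z f"
  shows "(SUP x\<in>unit_ball_on Z. f x) = 1"
proof -
  let ?B = "unit_ball_on Z"
  have abs1: "(SUP x\<in>?B. \<bar>f x\<bar>) = 1"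
    using assms(2) unfolding dual_unit_on_def by blast
  have "\<bar>f x\<bar> \<le> (SUP y\<in>?B. f y)" if "x \<in> ?B" for x
  proof -
    have "- x \<in> ?B" "f (- x) = - f x"
      using that assms subspace_neg[OF assms(1)]
      by (auto simp: unit_ball_on_def dual_unit_on_def dest: spec[of _ "-1"])
    moreover have "f x \<le> (SUP y\<in>?B. f y)" "f (- x) \<le> (SUP y\<in>?B. f y)"
      using that \<open>- x \<in> ?B\<close> bdd_above_dual_unit_on[OF assms(2)] by (auto intro: cSUP_upper)
    ultimately show ?thesis by (simp add: abs_if)
  qed
  then have "1 \<le> (SUP x\<in>?B. f x)"
    unfolding abs1[symmetric] using unit_ball_on_nonempty[OF assms(1)] by (intro cSUP_least)
  moreover have "(SUP x\<in>?B. f x) \<le> 1"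
    unfolding abs1[symmetric]
    by (intro cSUP_least[OF unit_ball_on_nonempty[OF assms(1)]]
        cSUP_upper2[OF bdd_above_abs_dual_unit_on[OF assms(2)]]) auto
  ultimately show ?thesis by simp
qed

lemma slice_contains_positive_point:
  assumes "subspace Z" "dual_unit_on Z f" "\<alpha> > 0"
  obtains x where "x \<in> unit_ball_on Z" "f x > 1 - \<alpha>" "f x > 0"
proof -
  have "max (1 - \<alpha>) 0 < (SUP x\<in>unit_ball_on Z. f x)"
    using SUP_unit_ball_dual_unit_on[OF assms(1,2)] assms(3) by simp
  then show thesis
    using that less_cSUP_iff[OF unit_ball_on_nonempty[OF assms(1)] bdd_above_dual_unit_on[OF assms(2)]]
    by auto
qed

lemma dual_unit_on_normalize:
  assumes "dual_unit_on X f" "subspace Z" "Z \<subseteq> X"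
    and c: "c = (SUP x\<in>unit_ball_on Z. \<bar>f x\<bar>)" "c > 0"
  shows "dual_unit_on Z (\<lambda>x. f x / c)"
  unfolding dual_unit_on_def
proof (intro conjI ballI allI)
  show "f (x + y) / c = f x / c + f y / c" if "x \<in> Z" "y \<in> Z" for x y
    using assms(1,3) that unfolding dual_unit_on_def by (simp add: subset_iff add_divide_distrib)
  show "f (a *\<^sub>R x) / c = a * (f x / c)" if "x \<in> Z" for a x
    using assms(1,3) that unfolding dual_unit_on_def by auto
  obtain K where K: "\<forall>x\<in>X. \<bar>f x\<bar> \<le> K * norm x"
    using assms(1) unfolding dual_unit_on_def by blast
  have "\<bar>f x / c\<bar> \<le> K / c * norm x" if "x \<in> Z" for x
    using K that assms(3) c(2) by (auto simp: divide_right_mono)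
  then show "\<exists>K. \<forall>x\<in>Z. \<bar>f x / c\<bar> \<le> K * norm x" by blast
  have "unit_ball_on Z \<subseteq> unit_ball_on X"
    using assms(3) by (auto simp: unit_ball_on_def)
  then have "bdd_above ((\<lambda>x. \<bar>f x\<bar>) ` unit_ball_on Z)"
    using bdd_above_abs_dual_unit_on[OF assms(1)] by (meson bdd_above_mono image_mono)
  then have "(SUP x\<in>unit_ball_on Z. \<bar>f x\<bar> / c) = c / c"
    using SUP_divide_pos unit_ball_on_nonempty[OF assms(2)] c by metis
  then show "(SUP x\<in>unit_ball_on Z. \<bar>f x / c\<bar>) = 1"
    using c(2) by simp
qed

text \<open>With \<open>\<beta> = 1 - (1 - \<alpha>) / c\<close> the slice condition \<open>g y > 1 - \<beta>\<close> is exactly \<open>f y > 1 - \<alpha>\<close>,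
  and \<open>\<beta> > 0\<close> because \<open>c \<ge> f x\<^sub>0 > 1 - \<alpha>\<close>.\<close>
lemma slice_restriction:
  assumes "subspace X" "subspace Z" "Z \<subseteq> X" "dual_unit_on X f"
    and x0: "x0 \<in> unit_ball_on Z" "f x0 > 1 - \<alpha>" "f x0 > 0"
  obtains g \<beta> where "dual_unit_on Z g" "\<beta> > 0"
    "slice (unit_ball_on Z) g \<beta> \<subseteq> slice (unit_ball_on X) f \<alpha>"
proof -
  have BZX: "unit_ball_on Z \<subseteq> unit_ball_on X"
    using assms(3) by (auto simp: unit_ball_on_def)
  define c where "c = (SUP x\<in>unit_ball_on Z. \<bar>f x\<bar>)"
  have "bdd_above ((\<lambda>x. \<bar>f x\<bar>) ` unit_ball_on Z)"
    using bdd_above_abs_dual_unit_on[OF assms(4)] BZX by (meson bdd_above_mono image_mono)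
  then have "f x0 \<le> c"
    unfolding c_def using x0(1) by (rule cSUP_upper2) simp
  with x0 have c: "c > 0" "1 - \<alpha> < c" by auto
  define g where "g = (\<lambda>x. f x / c)"
  define \<beta> where "\<beta> = 1 - (1 - \<alpha>) / c"
  have g: "dual_unit_on Z g"
    unfolding g_def using assms(4,2,3) c_def c(1) by (rule dual_unit_on_normalize)
  show thesis
  proof (rule that[OF g])
    show "\<beta> > 0" using c by (simp add: \<beta>_def field_simps)
    show "slice (unit_ball_on Z) g \<beta> \<subseteq> slice (unit_ball_on X) f \<alpha>"
    proof
      fix y assume "y \<in> slice (unit_ball_on Z) g \<beta>"
      then have y: "y \<in> unit_ball_on Z" "(1 - \<alpha>) / c < f y / c"
        unfolding slice_def SUP_unit_ball_dual_unit_on[OF assms(2) g] by (auto simp: g_def \<beta>_def)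
      from y(2) c(1) have "1 - \<alpha> < f y" by (simp add: divide_less_cancel)
      with y(1) BZX show "y \<in> slice (unit_ball_on X) f \<alpha>"
        unfolding slice_def SUP_unit_ball_dual_unit_on[OF assms(1,4)] by auto
    qed
  qed
qed

lemma bounded_slice_unit_ball: "bounded (slice (unit_ball_on Z) f \<alpha>)"
  by (rule bounded_subset[of "cball 0 1"]) (auto simp: slice_def unit_ball_on_def)

lemma BDP_on_countable_witnesses:
  assumes "subspace X" "BDP_on X"
  obtains C where "countable C" "\<And>Z. subspace Z \<Longrightarrow> C \<subseteq> Z \<Longrightarrow> Z \<subseteq> X \<Longrightarrow> BDP_on Z"
proof -
  let ?B = "unit_ball_on X"
  have "\<forall>n::nat. \<exists>f \<alpha> x. (dual_unit_on X f \<and> \<alpha> > 0 \<and> diameter (slice ?B f \<alpha>) < 1 / Suc n) \<and>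
          x \<in> ?B \<and> f x > 1 - \<alpha> \<and> f x > 0"
  proof
    fix n :: nat
    have "(1::real) / Suc n > 0" by simp
    then obtain f \<alpha> where f: "dual_unit_on X f" "\<alpha> > 0" "diameter (slice ?B f \<alpha>) < 1 / Suc n"
      using assms(2) unfolding BDP_on_def by blast
    moreover obtain x where "x \<in> ?B" "f x > 1 - \<alpha>" "f x > 0"
      using slice_contains_positive_point[OF assms(1) f(1,2)] .
    ultimately show "\<exists>f \<alpha> x. (dual_unit_on X f \<and> \<alpha> > 0 \<and> diameter (slice ?B f \<alpha>) < 1 / Suc n) \<and>
          x \<in> ?B \<and> f x > 1 - \<alpha> \<and> f x > 0" by blast
  qed
  then have "\<exists>f \<alpha> x. \<forall>n::nat. (dual_unit_on X (f n) \<and> \<alpha> n > 0 \<and> diameter (slice ?B (f n) (\<alpha> n)) < 1 / Suc n) \<and>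
          x n \<in> ?B \<and> f n (x n) > 1 - \<alpha> n \<and> f n (x n) > 0"
    by (simp only: choice_iff)
  then obtain f \<alpha> x where
    slices: "\<And>n. dual_unit_on X (f n) \<and> \<alpha> n > 0 \<and> diameter (slice ?B (f n) (\<alpha> n)) < 1 / Suc n" and
    points: "\<And>n. x n \<in> ?B \<and> f n (x n) > 1 - \<alpha> n \<and> f n (x n) > 0"
    by blast
  show thesis
  proof (rule that[of "range x"])
    fix Z assume Z: "subspace Z" "range x \<subseteq> Z" "Z \<subseteq> X"
    show "BDP_on Z"
      unfolding BDP_on_def
    proof (intro allI impI)
      fix \<epsilon> :: real assume "\<epsilon> > 0"
      then obtain n where n: "1 / Suc n < \<epsilon>" using nat_approx_posE by blast
      have "x n \<in> unit_ball_on Z" using points[of n] Z(2) by (auto simp: unit_ball_on_def)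
      then obtain g \<beta> where g: "dual_unit_on Z g" "\<beta> > 0"
          "slice (unit_ball_on Z) g \<beta> \<subseteq> slice ?B (f n) (\<alpha> n)"
        using slice_restriction[OF assms(1) Z(1,3)] slices[of n] points[of n] by blast
      have "diameter (slice (unit_ball_on Z) g \<beta>) \<le> diameter (slice ?B (f n) (\<alpha> n))"
        using g(3) bounded_slice_unit_ball by (rule diameter_subset)
      with slices[of n] n have "diameter (slice (unit_ball_on Z) g \<beta>) < \<epsilon>" by linarith
      with g(1,2) show "\<exists>g \<beta>. dual_unit_on Z g \<and> \<beta> > 0 \<and> diameter (slice (unit_ball_on Z) g \<beta>) < \<epsilon>"
        by blast
    qed
  qed simp
qed

theorem mainTheorem2:
  fixes Y :: "'a::banach set"
  assumes "BDP_on (UNIV :: 'a set)"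
    and "subspace Y" and "closed Y" and "separable_space (subtopology euclidean Y)"
  shows "\<exists>Z. subspace Z \<and> closed Z \<and> separable_space (subtopology euclidean Z) \<and>
             Y \<subseteq> Z \<and> BDP_on Z"
proof -
  obtain C :: "'a set" where C: "countable C" "\<And>Z. subspace Z \<Longrightarrow> C \<subseteq> Z \<Longrightarrow> Z \<subseteq> UNIV \<Longrightarrow> BDP_on Z"
    using BDP_on_countable_witnesses[OF subspace_UNIV assms(1)] by blast
  obtain D where D: "countable D" "Y \<subseteq> closure D"
    using separable_space_imp_dense_countable[OF assms(4)] .
  from C(1) D(1) have "countable (D \<union> C)" by simp
  then obtain Z where Z: "subspace Z" "closed Z" "separable_space (subtopology euclidean Z)" "D \<union> C \<subseteq> Z"
    by (rule separable_closed_subspace_superset)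
  have "Y \<subseteq> Z"
    using D(2) closure_minimal[OF _ Z(2)] Z(4) by blast
  moreover have "BDP_on Z"
    using C(2)[OF Z(1)] Z(4) by simp
  ultimately show ?thesis using Z(1-3) by blast
qed

end
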